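(* Let $N_1,N_2,N_3\ge0$ be integers and $\Phi\in P(N_1,N_2,N_3)$. Suppose the kernel of $A(N_1,N_2,N_3)$ has dimension $\nu_A=1$. Then every $f\in D_A$ is an extremal polynomial in the class $Q(N_1,N_2,N_3)$.
   Context: For integers $N_1,N_2,N_3\ge0$, $\sigma(N_1,N_2,N_3)$ is the set of trigonometric polynomials $f(\alpha,\beta,\gamma)=\sum_{|k|\le N_1}\sum_{|\ell|\le N_2}\sum_{|m|\le N_3} q(k,\ell,m)e^{i(k\alpha+\ell\beta+m\gamma)}$ with $f\ge0$ for all real $\alpha,\beta,\gamma$; $Q(N_1,N_2,N_3)$ is the set of $f\in\sigma(N_1,N_2,N_3)$ of the form $f=\sum_{j=1}^r|F_j|^2$ with $F_j=\sum_{0\le k\le N_1,0\le\ell\le N_2,0\le m\le N_3}q_j(k,\ell,m)e^{i(k\alpha+\ell\beta+m\gamma)}$. Let $S=\{(k,\ell,m)\in\mathbb Z^3:0\le k\le N_1,0\le\ell\le N_2,0\le m\le N_3\}$, $\Delta=S-S$. $P(N_1,N_2,N_3)$ is the class of $\Phi:\Delta\to\mathbb C$ with $\sum_{i,j}\xi_i\bar\xi_j\Phi(x_i-x_j)\ge0$ for all $x_i\in S$, $\xi_i\in\mathbb C$. $A(N_1,N_2,N_3)$ is the matrix indexed by $S\times S$ with entry $\Phi(y-x)$ in row $x$, column $y$; $\nu_A$ is the dimension of its (complex) kernel. For a vector $e=(e(x))_{x\in S}$ put $F_e(\alpha,\beta,\gamma)=\sum_{(k,\ell,m)\in S}e(k,\ell,m)e^{i(k\alpha+\ell\beta+m\gamma)}$.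 $D_A$ is the convex hull of the polynomials $|F_e|^2$ with $e\ne0$ in the kernel of $A(N_1,N_2,N_3)$. An element $f$ of a convex cone $U$ is called extremal in $U$ if whenever $f=g+h$ with $g,h\in U$, both $g$ and $h$ are nonnegative multiples of $f$. *)

theory Defs
  imports "HOL-Analysis.Analysis" "HOL-Library.Function_Algebras"
begin

type_synonym idx = "int \<times> int \<times> int"

definition Sset :: "nat \<Rightarrow> nat \<Rightarrow> nat \<Rightarrow> idx set" where
  "Sset N1 N2 N3 = {(k,l,m). 0 \<le> k \<and> k \<le> int N1 \<and> 0 \<le> l \<and> l \<le> int N2 \<and> 0 \<le> m \<and> m \<le> int N3}"

definition Fpoly :: "nat \<Rightarrow> nat \<Rightarrow> nat \<Rightarrow> (idx \<Rightarrow> complex) \<Rightarrow> real \<Rightarrow> real \<Rightarrow> real \<Rightarrow> complex" where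
  "Fpoly N1 N2 N3 e \<alpha> \<beta> \<gamma> =
     (\<Sum>(k,l,m)\<in>Sset N1 N2 N3. e (k,l,m) *
        exp (\<i> * complex_of_real (of_int k * \<alpha> + of_int l * \<beta> + of_int m * \<gamma>)))"

definition Qclass :: "nat \<Rightarrow> nat \<Rightarrow> nat \<Rightarrow> (real \<Rightarrow> real \<Rightarrow> real \<Rightarrow> real) set" where
  "Qclass N1 N2 N3 = {f. \<exists>(r::nat) (q :: nat \<Rightarrow> idx \<Rightarrow> complex).
      f = (\<lambda>\<alpha> \<beta> \<gamma>. \<Sum>j<r. (cmod (Fpoly N1 N2 N3 (q j) \<alpha> \<beta> \<gamma>))\<^sup>2)}"

text \<open>The class P(N1,N2,N3) of positive definite functions on Delta = S - S
  (only values on Delta are relevant).\<close>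
definition Pclass :: "nat \<Rightarrow> nat \<Rightarrow> nat \<Rightarrow> (idx \<Rightarrow> complex) set" where
  "Pclass N1 N2 N3 = {\<Phi>. \<forall>(n::nat) (x :: nat \<Rightarrow> idx) (\<xi> :: nat \<Rightarrow> complex).
      (\<forall>i<n. x i \<in> Sset N1 N2 N3) \<longrightarrow>
      (let s = (\<Sum>i<n. \<Sum>j<n. \<xi> i * cnj (\<xi> j) * \<Phi> (x i - x j)) in Im s = 0 \<and> Re s \<ge> 0)}"

text \<open>Kernel of the matrix A with entry Phi(y - x) in row x, column y;
  vectors are functions on idx vanishing outside S.\<close>
definition kerA :: "nat \<Rightarrow> nat \<Rightarrow> nat \<Rightarrow> (idx \<Rightarrow> complex) \<Rightarrow> (idx \<Rightarrow> complex) set" where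
  "kerA N1 N2 N3 \<Phi> = {e. (\<forall>x. x \<notin> Sset N1 N2 N3 \<longrightarrow> e x = 0) \<and>
      (\<forall>x\<in>Sset N1 N2 N3. (\<Sum>y\<in>Sset N1 N2 N3. \<Phi> (y - x) * e y) = 0)}"

definition nuA :: "nat \<Rightarrow> nat \<Rightarrow> nat \<Rightarrow> (idx \<Rightarrow> complex) \<Rightarrow> nat" where
  "nuA N1 N2 N3 \<Phi> = vector_space.dim (\<lambda>(c::complex) (e::idx \<Rightarrow> complex). (\<lambda>x. c * e x)) (kerA N1 N2 N3 \<Phi>)"

text \<open>D_A: convex hull of |F_e|^2 for nonzero e in the kernel (written out explicitly).\<close>
definition DA :: "nat \<Rightarrow> nat \<Rightarrow> nat \<Rightarrow> (idx \<Rightarrow> complex) \<Rightarrow> (real \<Rightarrow> real \<Rightarrow> real \<Rightarrow> real) set" where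
  "DA N1 N2 N3 \<Phi> = {f. \<exists>(n::nat) (c :: nat \<Rightarrow> real) (e :: nat \<Rightarrow> idx \<Rightarrow> complex).
      0 < n \<and> (\<forall>i<n. 0 \<le> c i) \<and> (\<Sum>i<n. c i) = 1 \<and>
      (\<forall>i<n. e i \<in> kerA N1 N2 N3 \<Phi> \<and> e i \<noteq> 0) \<and>
      f = (\<lambda>\<alpha> \<beta> \<gamma>. \<Sum>i<n. c i * (cmod (Fpoly N1 N2 N3 (e i) \<alpha> \<beta> \<gamma>))\<^sup>2)}"

definition extremal :: "(real \<Rightarrow> real \<Rightarrow> real \<Rightarrow> real) set \<Rightarrow> (real \<Rightarrow> real \<Rightarrow> real \<Rightarrow> real) \<Rightarrow> bool" where
  "extremal U f \<longleftrightarrow> f \<in> U \<and>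
     (\<forall>g h. g \<in> U \<longrightarrow> h \<in> U \<longrightarrow> f = (\<lambda>\<alpha> \<beta> \<gamma>. g \<alpha> \<beta> \<gamma> + h \<alpha> \<beta> \<gamma>) \<longrightarrow>
        (\<exists>a\<ge>0. g = (\<lambda>\<alpha> \<beta> \<gamma>. a * f \<alpha> \<beta> \<gamma>)) \<and> (\<exists>b\<ge>0. h = (\<lambda>\<alpha> \<beta> \<gamma>. b * f \<alpha> \<beta> \<gamma>)))"

end

theory Submission
  imports Defs
begin

(* Sample a function p at the M^3 grid points 2 pi t / M (with M > 2 N_i) and pair it with the
   symbol K(theta) = sum_d Phi(d) e^(-i d.theta).  By discrete orthogonality the resulting linear
   functional L satisfies L |F_u|^2 = u^* A u, which is nonnegative because Phi is positive
   definite and vanishes for u in ker A.  So if f in D_A splits as g + h in Q, then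
   0 = L f = L g + L h forces L g = L h = 0; since a positive semidefinite form vanishes only on
   its kernel, every coefficient vector occurring in g and h lies in ker A.  As ker A is spanned
   by a single e0, g, h and f are all nonnegative multiples of |F_e0|^2. *)

lemma sum_cis_root_of_unity_powers:
  fixes k :: int
  assumes "\<bar>k\<bar> < int M"
  shows "(\<Sum>t<M. cis (of_int k * (2 * pi * real t / real M))) = (if k = 0 then of_nat M else 0)"
proof (cases "k = 0")
  case False
  define z where "z = cis (2 * pi * of_int k / real M)"
  have "M > 0" using assms by linarith
  have z_power: "z ^ t = cis (of_int k * (2 * pi * real t / real M))" for t
    unfolding z_def Complex.DeMoivre by (simp add: field_simps)
  have "z \<noteq> 1"
  proof
    assume "z = 1"
    then obtain n :: int where "2 * pi * of_int k / real M = of_int n * 2 * pi"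
      by (auto simp: z_def complex_eq_iff cos_one_2pi_int)
    then have "k = int M * n"
      using \<open>M > 0\<close> by (simp add: field_simps) (metis of_int_eq_iff of_int_mult of_int_of_nat_eq)
    then show False using assms False by (auto simp: abs_mult mult_le_cancel_left1)
  qed
  moreover have "z ^ M = 1" using \<open>M > 0\<close> by (simp add: z_power mult.commute[of "of_int k"])
  ultimately have "(\<Sum>t<M. z ^ t) = 0" by (simp add: geometric_sum)
  with False show ?thesis by (simp only: z_power) simp
qed simp

definition phase :: "idx \<Rightarrow> real \<Rightarrow> real \<Rightarrow> real \<Rightarrow> real" where
  "phase v \<alpha> \<beta> \<gamma> = of_int (fst v) * \<alpha> + of_int (fst (snd v)) * \<beta> + of_int (snd (snd v)) * \<gamma>"

lemma phase_diff: "phase (v - w) \<alpha> \<beta> \<gamma> = phase v \<alpha> \<beta> \<gamma> - phase w \<alpha> \<beta> \<gamma>"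
  by (simp add: phase_def algebra_simps)

definition grid_sum :: "nat \<Rightarrow> (real \<Rightarrow> real \<Rightarrow> real \<Rightarrow> complex) \<Rightarrow> complex" where
  "grid_sum M F = (\<Sum>t1<M. \<Sum>t2<M. \<Sum>t3<M.
     F (2 * pi * real t1 / real M) (2 * pi * real t2 / real M) (2 * pi * real t3 / real M))"

lemma grid_sum_add: "grid_sum M (\<lambda>\<alpha> \<beta> \<gamma>. F \<alpha> \<beta> \<gamma> + G \<alpha> \<beta> \<gamma>) = grid_sum M F + grid_sum M G"
  by (simp add: grid_sum_def sum.distrib)

lemma grid_sum_cmult: "grid_sum M (\<lambda>\<alpha> \<beta> \<gamma>. c * F \<alpha> \<beta> \<gamma>) = c * grid_sum M F"
  by (simp add: grid_sum_def sum_distrib_left)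

lemma grid_sum_sum: "grid_sum M (\<lambda>\<alpha> \<beta> \<gamma>. \<Sum>i\<in>I. F i \<alpha> \<beta> \<gamma>) = (\<Sum>i\<in>I. grid_sum M (F i))"
  unfolding grid_sum_def by (subst (1 2 3) sum.swap) simp

lemma grid_sum_cis_phase:
  assumes "\<bar>fst w\<bar> < int M" "\<bar>fst (snd w)\<bar> < int M" "\<bar>snd (snd w)\<bar> < int M"
  shows "grid_sum M (\<lambda>\<alpha> \<beta> \<gamma>. cis (phase w \<alpha> \<beta> \<gamma>)) = (if w = 0 then of_nat M ^ 3 else 0)"
proof -
  obtain k l m where w: "w = (k, l, m)" by (cases w)
  have "grid_sum M (\<lambda>\<alpha> \<beta> \<gamma>. cis (phase w \<alpha> \<beta> \<gamma>)) =
      (\<Sum>t1<M. \<Sum>t2<M. \<Sum>t3<M. cis (of_int k * (2 * pi * real t1 / real M)) *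
         cis (of_int l * (2 * pi * real t2 / real M)) * cis (of_int m * (2 * pi * real t3 / real M)))"
    by (simp add: grid_sum_def w phase_def cis_mult)
  also have "\<dots> = (\<Sum>t<M. cis (of_int k * (2 * pi * real t / real M))) *
      (\<Sum>t<M. cis (of_int l * (2 * pi * real t / real M))) *
      (\<Sum>t<M. cis (of_int m * (2 * pi * real t / real M)))"
    by (simp only: sum_distrib_left[symmetric] sum_distrib_right[symmetric] mult.assoc)
  finally show ?thesis
    using assms sum_cis_root_of_unity_powers[of k M] sum_cis_root_of_unity_powers[of l M]
      sum_cis_root_of_unity_powers[of m M]
    by (auto simp: w zero_prod_def power3_eq_cube)
qed

definition toeplitz_form ::
    "'a::ab_group_add set \<Rightarrow> ('a \<Rightarrow> complex) \<Rightarrow> ('a \<Rightarrow> complex) \<Rightarrow> ('a \<Rightarrow> complex) \<Rightarrow> complex" where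
  "toeplitz_form S \<Phi> u v = (\<Sum>x\<in>S. \<Sum>y\<in>S. u x * cnj (v y) * \<Phi> (x - y))"

lemma toeplitz_form_add_scaled:
  "toeplitz_form S \<Phi> (\<lambda>z. u z + s * v z) (\<lambda>z. u z + s * v z) =
     toeplitz_form S \<Phi> u u + cnj s * toeplitz_form S \<Phi> u v + s * toeplitz_form S \<Phi> v u +
     s * cnj s * toeplitz_form S \<Phi> v v"
  by (simp add: toeplitz_form_def sum.distrib sum_distrib_left algebra_simps)

lemma toeplitz_form_indicator_right:
  assumes "finite S" "x \<in> S"
  shows "toeplitz_form S \<Phi> u (\<lambda>z. if z = x then 1 else 0) = (\<Sum>y\<in>S. \<Phi> (y - x) * u y)"
  using assms unfolding toeplitz_form_def
  by (auto simp: if_distrib[of cnj] mult.commute if_distrib[of "times _"] sum.delta'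
      intro!: sum.cong cong: if_cong)

lemma toeplitz_form_kernel_imp_zero:
  assumes "\<forall>x\<in>S. (\<Sum>y\<in>S. \<Phi> (y - x) * u y) = 0"
  shows "toeplitz_form S \<Phi> u u = 0"
proof -
  have "toeplitz_form S \<Phi> u u = (\<Sum>x\<in>S. cnj (u x) * (\<Sum>y\<in>S. \<Phi> (y - x) * u y))"
    unfolding toeplitz_form_def sum_distrib_left by (subst sum.swap) (simp add: mult_ac)
  with assms show ?thesis by simp
qed

lemma linear_term_zero_if_quadratic_nonneg:
  fixes X q :: complex
  assumes "Im q = 0" "0 \<le> Re q"
    and nonneg: "\<And>t::real. Im (of_real t * X + of_real (t\<^sup>2) * q) = 0 \<and>
      0 \<le> Re (of_real t * X + of_real (t\<^sup>2) * q)"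
  shows "X = 0"
proof -
  have "Im X = 0" using nonneg[of 1] assms by simp
  define t where "t = - Re X / (Re q + 1)"
  have Re_X: "Re X = - t * (Re q + 1)" using assms by (simp add: t_def field_simps)
  have "t * Re X + t\<^sup>2 * Re q = - t\<^sup>2" unfolding Re_X by (simp add: algebra_simps power2_eq_square)
  moreover have "0 \<le> t * Re X + t\<^sup>2 * Re q" using nonneg[of t] assms by simp
  ultimately have "t = 0" by simp
  with Re_X \<open>Im X = 0\<close> show ?thesis by (simp add: complex_eq_iff)
qed

(* Perturbing u by real and by imaginary multiples of the coordinate vector of x keeps the
   form nonnegative, which forces both off-diagonal terms to vanish. *)
lemma psd_toeplitz_form_zero_imp_kernel:
  assumes "finite S" "x \<in> S"
    and psd: "\<And>w. Im (toeplitz_form S \<Phi> w w) = 0 \<and> 0 \<le> Re (toeplitz_form S \<Phi> w w)"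
    and "toeplitz_form S \<Phi> u u = 0"
  shows "(\<Sum>y\<in>S. \<Phi> (y - x) * u y) = 0"
proof -
  define v where "v = (\<lambda>z. if z = x then 1 else 0 :: complex)"
  define P R where "P = toeplitz_form S \<Phi> u v" and "R = toeplitz_form S \<Phi> v u"
  have along_v: "toeplitz_form S \<Phi> (\<lambda>z. u z + s * v z) (\<lambda>z. u z + s * v z) =
      cnj s * P + s * R + s * cnj s * toeplitz_form S \<Phi> v v" for s
    using assms(4) by (simp add: toeplitz_form_add_scaled P_def R_def)
  have "P + R = 0"
  proof (rule linear_term_zero_if_quadratic_nonneg)
    fix t :: real
    show "Im (of_real t * (P + R) + of_real (t\<^sup>2) * toeplitz_form S \<Phi> v v) = 0 \<and>
        0 \<le> Re (of_real t * (P + R) + of_real (t\<^sup>2) * toeplitz_form S \<Phi> v v)"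
      using psd[of "\<lambda>z. u z + of_real t * v z"] unfolding along_v
      by (simp add: algebra_simps power2_eq_square)
  qed (use psd in auto)
  moreover have "\<i> * (R - P) = 0"
  proof (rule linear_term_zero_if_quadratic_nonneg)
    fix t :: real
    show "Im (of_real t * (\<i> * (R - P)) + of_real (t\<^sup>2) * toeplitz_form S \<Phi> v v) = 0 \<and>
        0 \<le> Re (of_real t * (\<i> * (R - P)) + of_real (t\<^sup>2) * toeplitz_form S \<Phi> v v)"
      using psd[of "\<lambda>z. u z + (\<i> * of_real t) * v z"] unfolding along_v
      by (simp add: algebra_simps power2_eq_square)
  qed (use psd in auto)
  ultimately have "P = 0" by (simp add: algebra_simps)
  then show ?thesis using assms by (simp add: P_def v_def toeplitz_form_indicator_right)
qed

lemma Sset_eq: "Sset N1 N2 N3 = {0..int N1} \<times> {0..int N2} \<times> {0..int N3}"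
  by (auto simp: Sset_def)

lemma finite_Sset [simp]: "finite (Sset N1 N2 N3)"
  by (simp add: Sset_eq)

lemma Pclass_toeplitz_form_nonneg:
  assumes "\<Phi> \<in> Pclass N1 N2 N3"
  shows "Im (toeplitz_form (Sset N1 N2 N3) \<Phi> u u) = 0 \<and> 0 \<le> Re (toeplitz_form (Sset N1 N2 N3) \<Phi> u u)"
proof -
  define S where "S = Sset N1 N2 N3"
  obtain enum where enum: "bij_betw enum {..<card S} S"
    using ex_bij_betw_nat_finite[of S] by (auto simp: S_def lessThan_atLeast0)
  have enum_sum: "(\<Sum>i<card S. \<Sum>j<card S. u (enum i) * cnj (u (enum j)) * \<Phi> (enum i - enum j)) =
      toeplitz_form S \<Phi> u u"
  proof -
    have "(\<Sum>i<card S. \<Sum>j<card S. u (enum i) * cnj (u (enum j)) * \<Phi> (enum i - enum j)) =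
        (\<Sum>x\<in>S. \<Sum>j<card S. u x * cnj (u (enum j)) * \<Phi> (x - enum j))"
      by (rule sum.reindex_bij_betw[OF enum])
    also have "\<dots> = toeplitz_form S \<Phi> u u"
      unfolding toeplitz_form_def by (intro sum.cong refl sum.reindex_bij_betw[OF enum])
    finally show ?thesis .
  qed
  have "\<forall>i<card S. enum i \<in> S" using enum by (auto simp: bij_betw_def)
  moreover have "(\<forall>i<card S. enum i \<in> S) \<longrightarrow>
      (let s = (\<Sum>i<card S. \<Sum>j<card S. u (enum i) * cnj (u (enum j)) * \<Phi> (enum i - enum j))
       in Im s = 0 \<and> 0 \<le> Re s)"
    using assms unfolding Pclass_def S_def[symmetric] mem_Collect_eq
    by (elim allE[of _ "card S"] allE[of _ enum] allE[of _ "\<lambda>i. u (enum i)"]) assumption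
  ultimately have "Im (toeplitz_form S \<Phi> u u) = 0 \<and> 0 \<le> Re (toeplitz_form S \<Phi> u u)"
    unfolding Let_def enum_sum by blast
  then show ?thesis by (simp only: S_def)
qed

lemma toeplitz_form_restrict:
  "toeplitz_form S \<Phi> (\<lambda>x. if x \<in> S then u x else 0) (\<lambda>x. if x \<in> S then u x else 0) =
     toeplitz_form S \<Phi> u u"
  unfolding toeplitz_form_def by (intro sum.cong refl) auto

lemma Pclass_toeplitz_form_zero_imp_kerA:
  assumes "\<Phi> \<in> Pclass N1 N2 N3" "toeplitz_form (Sset N1 N2 N3) \<Phi> u u = 0"
  shows "(\<lambda>x. if x \<in> Sset N1 N2 N3 then u x else 0) \<in> kerA N1 N2 N3 \<Phi>"
proof -
  let ?r = "\<lambda>x. if x \<in> Sset N1 N2 N3 then u x else 0"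
  have "toeplitz_form (Sset N1 N2 N3) \<Phi> ?r ?r = 0"
    using assms(2) by (simp only: toeplitz_form_restrict)
  then have "\<forall>x\<in>Sset N1 N2 N3. (\<Sum>y\<in>Sset N1 N2 N3. \<Phi> (y - x) * ?r y) = 0"
    using psd_toeplitz_form_zero_imp_kernel[OF finite_Sset _ Pclass_toeplitz_form_nonneg[OF assms(1)]]
    by blast
  then show ?thesis unfolding kerA_def by simp
qed

lemma kerA_toeplitz_form_zero:
  "e \<in> kerA N1 N2 N3 \<Phi> \<Longrightarrow> toeplitz_form (Sset N1 N2 N3) \<Phi> e e = 0"
  by (simp add: kerA_def toeplitz_form_kernel_imp_zero)

lemma nuA_eq_1_imp_kerA_generator:
  assumes "nuA N1 N2 N3 \<Phi> = 1"
  obtains e0 where "\<And>e. e \<in> kerA N1 N2 N3 \<Phi> \<Longrightarrow> \<exists>k. e = (\<lambda>x. k * e0 x)"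
proof -
  interpret V: vector_space "\<lambda>(c::complex) (e::idx \<Rightarrow> complex). (\<lambda>x. c * e x)"
    by unfold_locales (simp_all add: fun_eq_iff algebra_simps)
  obtain B where B: "B \<subseteq> kerA N1 N2 N3 \<Phi>" "kerA N1 N2 N3 \<Phi> \<subseteq> V.span B"
      "card B = V.dim (kerA N1 N2 N3 \<Phi>)"
    by (rule V.basis_exists) blast
  then obtain e0 where e0: "B = {e0}" using assms by (auto simp: nuA_def card_1_singleton_iff)
  show ?thesis
  proof (rule that)
    show "\<exists>k. e = (\<lambda>x. k * e0 x)" if "e \<in> kerA N1 N2 N3 \<Phi>" for e
      using B e0 that by (auto simp: V.span_singleton)
  qed
qed

lemma Fpoly_eq_sum_cis:
  "Fpoly N1 N2 N3 e \<alpha> \<beta> \<gamma> = (\<Sum>v\<in>Sset N1 N2 N3. e v * cis (phase v \<alpha> \<beta> \<gamma>))"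
  unfolding Fpoly_def by (intro sum.cong refl) (auto simp: cis_conv_exp phase_def)

lemma Fpoly_cmult: "Fpoly N1 N2 N3 (\<lambda>x. k * e x) \<alpha> \<beta> \<gamma> = k * Fpoly N1 N2 N3 e \<alpha> \<beta> \<gamma>"
  by (simp add: Fpoly_eq_sum_cis sum_distrib_left mult.assoc)

lemma Fpoly_restrict:
  "Fpoly N1 N2 N3 (\<lambda>x. if x \<in> Sset N1 N2 N3 then e x else 0) = Fpoly N1 N2 N3 e"
  unfolding Fpoly_eq_sum_cis by (intro ext sum.cong refl) auto

lemma norm_Fpoly_squared:
  "complex_of_real ((cmod (Fpoly N1 N2 N3 e \<alpha> \<beta> \<gamma>))\<^sup>2) =
    (\<Sum>x\<in>Sset N1 N2 N3. \<Sum>y\<in>Sset N1 N2 N3. e x * cnj (e y) * cis (phase (x - y) \<alpha> \<beta> \<gamma>))"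
  unfolding complex_norm_square Fpoly_eq_sum_cis
  by (simp add: sum_product cis_cnj cis_mult phase_diff mult_ac)

definition toeplitz_symbol :: "nat \<Rightarrow> nat \<Rightarrow> nat \<Rightarrow> (idx \<Rightarrow> complex) \<Rightarrow> real \<Rightarrow> real \<Rightarrow> real \<Rightarrow> complex" where
  "toeplitz_symbol N1 N2 N3 \<Phi> \<alpha> \<beta> \<gamma> =
     (\<Sum>d\<in>{-int N1..int N1} \<times> {-int N2..int N2} \<times> {-int N3..int N3}. \<Phi> d * cis (- phase d \<alpha> \<beta> \<gamma>))"

(* M exceeds 2 N_i, which bounds the i-th coordinate of every frequency x - y - d occurring in
   |F_u|^2 times the symbol, so the grid sum sees only the frequency zero. *)
definition sample_pairing ::
    "nat \<Rightarrow> nat \<Rightarrow> nat \<Rightarrow> (idx \<Rightarrow> complex) \<Rightarrow> (real \<Rightarrow> real \<Rightarrow> real \<Rightarrow> real) \<Rightarrow> complex" where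
  "sample_pairing N1 N2 N3 \<Phi> p = (let M = 2 * (N1 + N2 + N3) + 1 in
     grid_sum M (\<lambda>\<alpha> \<beta> \<gamma>. of_real (p \<alpha> \<beta> \<gamma>) * toeplitz_symbol N1 N2 N3 \<Phi> \<alpha> \<beta> \<gamma>) / of_nat M ^ 3)"

lemma sample_pairing_add:
  "sample_pairing N1 N2 N3 \<Phi> (\<lambda>\<alpha> \<beta> \<gamma>. p \<alpha> \<beta> \<gamma> + q \<alpha> \<beta> \<gamma>) =
     sample_pairing N1 N2 N3 \<Phi> p + sample_pairing N1 N2 N3 \<Phi> q"
  by (simp add: sample_pairing_def Let_def distrib_right grid_sum_add add_divide_distrib)

lemma sample_pairing_scale:
  "sample_pairing N1 N2 N3 \<Phi> (\<lambda>\<alpha> \<beta> \<gamma>. c * p \<alpha> \<beta> \<gamma>) = of_real c * sample_pairing N1 N2 N3 \<Phi> p"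
  by (simp add: sample_pairing_def Let_def mult.assoc grid_sum_cmult)

lemma sample_pairing_sum:
  "sample_pairing N1 N2 N3 \<Phi> (\<lambda>\<alpha> \<beta> \<gamma>. \<Sum>i\<in>I. p i \<alpha> \<beta> \<gamma>) = (\<Sum>i\<in>I. sample_pairing N1 N2 N3 \<Phi> (p i))"
  by (simp add: sample_pairing_def Let_def sum_distrib_right grid_sum_sum sum_divide_distrib)

lemma sample_pairing_norm_Fpoly_squared:
  "sample_pairing N1 N2 N3 \<Phi> (\<lambda>\<alpha> \<beta> \<gamma>. (cmod (Fpoly N1 N2 N3 u \<alpha> \<beta> \<gamma>))\<^sup>2) =
     toeplitz_form (Sset N1 N2 N3) \<Phi> u u"
proof -
  define M where "M = 2 * (N1 + N2 + N3) + 1"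
  define S where "S = Sset N1 N2 N3"
  define D where "D = {-int N1..int N1} \<times> {-int N2..int N2} \<times> {-int N3..int N3}"
  have "grid_sum M (\<lambda>\<alpha> \<beta> \<gamma>. of_real ((cmod (Fpoly N1 N2 N3 u \<alpha> \<beta> \<gamma>))\<^sup>2) *
        toeplitz_symbol N1 N2 N3 \<Phi> \<alpha> \<beta> \<gamma>) =
      grid_sum M (\<lambda>\<alpha> \<beta> \<gamma>. \<Sum>x\<in>S. \<Sum>y\<in>S. \<Sum>d\<in>D.
        u x * cnj (u y) * \<Phi> d * cis (phase (x - y - d) \<alpha> \<beta> \<gamma>))"
    unfolding norm_Fpoly_squared toeplitz_symbol_def S_def D_def sum_distrib_right
    unfolding sum_distrib_left
    by (intro arg_cong[where f="grid_sum M"] ext sum.cong refl) (simp add: phase_diff cis_mult mult_ac)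
  also have "\<dots> = (\<Sum>x\<in>S. \<Sum>y\<in>S. \<Sum>d\<in>D.
      u x * cnj (u y) * \<Phi> d * grid_sum M (\<lambda>\<alpha> \<beta> \<gamma>. cis (phase (x - y - d) \<alpha> \<beta> \<gamma>)))"
    by (simp add: grid_sum_sum grid_sum_cmult)
  also have "\<dots> = (\<Sum>x\<in>S. \<Sum>y\<in>S. \<Sum>d\<in>D.
      u x * cnj (u y) * \<Phi> d * (if d = x - y then of_nat M ^ 3 else 0))"
  proof (intro sum.cong refl)
    fix x y d assume "x \<in> S" "y \<in> S" "d \<in> D"
    then have "\<bar>fst (x - y - d)\<bar> < int M" "\<bar>fst (snd (x - y - d))\<bar> < int M"
        "\<bar>snd (snd (x - y - d))\<bar> < int M"
      by (auto simp: S_def D_def M_def Sset_eq)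
    then show "u x * cnj (u y) * \<Phi> d * grid_sum M (\<lambda>\<alpha> \<beta> \<gamma>. cis (phase (x - y - d) \<alpha> \<beta> \<gamma>)) =
        u x * cnj (u y) * \<Phi> d * (if d = x - y then of_nat M ^ 3 else 0)"
      by (auto simp: grid_sum_cis_phase)
  qed
  also have "\<dots> = of_nat M ^ 3 * toeplitz_form S \<Phi> u u"
    unfolding toeplitz_form_def sum_distrib_left
  proof (intro sum.cong refl)
    fix x y assume "x \<in> S" "y \<in> S"
    then have "x - y \<in> D" by (auto simp: S_def D_def Sset_eq)
    moreover have "finite D" by (simp add: D_def)
    ultimately show "(\<Sum>d\<in>D. u x * cnj (u y) * \<Phi> d * (if d = x - y then of_nat M ^ 3 else 0)) =
        of_nat M ^ 3 * (u x * cnj (u y) * \<Phi> (x - y))"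
      by (simp add: if_distrib[of "times _"] sum.delta' cong: if_cong)
  qed
  finally have "grid_sum M (\<lambda>\<alpha> \<beta> \<gamma>. of_real ((cmod (Fpoly N1 N2 N3 u \<alpha> \<beta> \<gamma>))\<^sup>2) *
      toeplitz_symbol N1 N2 N3 \<Phi> \<alpha> \<beta> \<gamma>) = of_nat M ^ 3 * toeplitz_form S \<Phi> u u" .
  moreover have "M > 0" by (simp add: M_def)
  ultimately show ?thesis unfolding sample_pairing_def Let_def M_def[symmetric] S_def by simp
qed

lemma Qclass_sample_pairing:
  "sample_pairing N1 N2 N3 \<Phi> (\<lambda>\<alpha> \<beta> \<gamma>. \<Sum>j<r. (cmod (Fpoly N1 N2 N3 (q j) \<alpha> \<beta> \<gamma>))\<^sup>2) =
     (\<Sum>j<r. toeplitz_form (Sset N1 N2 N3) \<Phi> (q j) (q j))"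
  by (simp add: sample_pairing_sum sample_pairing_norm_Fpoly_squared)

lemma Qclass_sample_pairing_nonneg:
  assumes "\<Phi> \<in> Pclass N1 N2 N3" "g \<in> Qclass N1 N2 N3"
  shows "Im (sample_pairing N1 N2 N3 \<Phi> g) = 0 \<and> 0 \<le> Re (sample_pairing N1 N2 N3 \<Phi> g)"
proof -
  obtain r q where "g = (\<lambda>\<alpha> \<beta> \<gamma>. \<Sum>j<(r::nat). (cmod (Fpoly N1 N2 N3 (q j) \<alpha> \<beta> \<gamma>))\<^sup>2)"
    using assms(2) unfolding Qclass_def by blast
  then show ?thesis
    using Pclass_toeplitz_form_nonneg[OF assms(1)] by (simp add: Qclass_sample_pairing sum_nonneg)
qed

lemma Pclass_toeplitz_form_zero_imp_Fpoly_multiple: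
  assumes "\<Phi> \<in> Pclass N1 N2 N3"
    and generator: "\<And>e. e \<in> kerA N1 N2 N3 \<Phi> \<Longrightarrow> \<exists>k. e = (\<lambda>x. k * e0 x)"
    and "toeplitz_form (Sset N1 N2 N3) \<Phi> u u = 0"
  shows "\<exists>k. Fpoly N1 N2 N3 u = (\<lambda>\<alpha> \<beta> \<gamma>. k * Fpoly N1 N2 N3 e0 \<alpha> \<beta> \<gamma>)"
proof -
  obtain k where "(\<lambda>x. if x \<in> Sset N1 N2 N3 then u x else 0) = (\<lambda>x. k * e0 x)"
    using generator[OF Pclass_toeplitz_form_zero_imp_kerA[OF assms(1,3)]] by blast
  then have "Fpoly N1 N2 N3 u = Fpoly N1 N2 N3 (\<lambda>x. k * e0 x)"
    using Fpoly_restrict[of N1 N2 N3 u] by simp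
  then show ?thesis by (intro exI[of _ k]) (simp add: fun_eq_iff Fpoly_cmult)
qed

lemma Qclass_sample_pairing_zero_imp_multiple:
  assumes "\<Phi> \<in> Pclass N1 N2 N3"
    and generator: "\<And>e. e \<in> kerA N1 N2 N3 \<Phi> \<Longrightarrow> \<exists>k. e = (\<lambda>x. k * e0 x)"
    and "g \<in> Qclass N1 N2 N3" "sample_pairing N1 N2 N3 \<Phi> g = 0"
  shows "\<exists>a\<ge>0. g = (\<lambda>\<alpha> \<beta> \<gamma>. a * (cmod (Fpoly N1 N2 N3 e0 \<alpha> \<beta> \<gamma>))\<^sup>2)"
proof -
  obtain r q where g: "g = (\<lambda>\<alpha> \<beta> \<gamma>. \<Sum>j<(r::nat). (cmod (Fpoly N1 N2 N3 (q j) \<alpha> \<beta> \<gamma>))\<^sup>2)"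
    using assms(3) unfolding Qclass_def by blast
  let ?T = "\<lambda>j. toeplitz_form (Sset N1 N2 N3) \<Phi> (q j) (q j)"
  have "(\<Sum>j<r. Re (?T j)) = 0"
    using assms(4) by (simp add: g Qclass_sample_pairing flip: Re_sum)
  then have "Re (?T j) = 0" if "j < r" for j
    using that Pclass_toeplitz_form_nonneg[OF assms(1)] by (simp add: sum_nonneg_eq_0_iff)
  then have "?T j = 0" if "j < r" for j
    using that Pclass_toeplitz_form_nonneg[OF assms(1)] by (simp add: complex_eq_iff)
  then have "\<forall>j. \<exists>k. j < r \<longrightarrow> Fpoly N1 N2 N3 (q j) = (\<lambda>\<alpha> \<beta> \<gamma>. k * Fpoly N1 N2 N3 e0 \<alpha> \<beta> \<gamma>)"
    using Pclass_toeplitz_form_zero_imp_Fpoly_multiple[OF assms(1) generator] by blast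
  from choice[OF this] obtain k
    where k: "\<forall>j. j < r \<longrightarrow> Fpoly N1 N2 N3 (q j) = (\<lambda>\<alpha> \<beta> \<gamma>. k j * Fpoly N1 N2 N3 e0 \<alpha> \<beta> \<gamma>)"
    by blast
  have "g = (\<lambda>\<alpha> \<beta> \<gamma>. (\<Sum>j<r. (cmod (k j))\<^sup>2) * (cmod (Fpoly N1 N2 N3 e0 \<alpha> \<beta> \<gamma>))\<^sup>2)"
    unfolding g sum_distrib_right by (intro ext sum.cong refl) (simp add: k norm_mult power_mult_distrib)
  moreover have "0 \<le> (\<Sum>j<r. (cmod (k j))\<^sup>2)" by (simp add: sum_nonneg)
  ultimately show ?thesis by blast
qed

lemma DA_subset_Qclass: "DA N1 N2 N3 \<Phi> \<subseteq> Qclass N1 N2 N3"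
proof
  fix f assume "f \<in> DA N1 N2 N3 \<Phi>"
  then obtain n c e where c: "\<forall>i<n. 0 \<le> c i"
    and f: "f = (\<lambda>\<alpha> \<beta> \<gamma>. \<Sum>i<(n::nat). c i * (cmod (Fpoly N1 N2 N3 (e i) \<alpha> \<beta> \<gamma>))\<^sup>2)"
    unfolding DA_def by blast
  show "f \<in> Qclass N1 N2 N3"
    unfolding Qclass_def mem_Collect_eq
  proof (intro exI)
    show "f = (\<lambda>\<alpha> \<beta> \<gamma>. \<Sum>i<n. (cmod (Fpoly N1 N2 N3 (\<lambda>x. of_real (sqrt (c i)) * e i x) \<alpha> \<beta> \<gamma>))\<^sup>2)"
      unfolding f Fpoly_cmult using c by (intro ext sum.cong refl) (simp add: norm_mult power_mult_distrib)
  qed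
qed

lemma DA_sample_pairing_zero:
  assumes "f \<in> DA N1 N2 N3 \<Phi>"
  shows "sample_pairing N1 N2 N3 \<Phi> f = 0"
proof -
  obtain n c e where e: "\<forall>i<n. e i \<in> kerA N1 N2 N3 \<Phi>"
    and f: "f = (\<lambda>\<alpha> \<beta> \<gamma>. \<Sum>i<(n::nat). c i * (cmod (Fpoly N1 N2 N3 (e i) \<alpha> \<beta> \<gamma>))\<^sup>2)"
    using assms unfolding DA_def by blast
  then show ?thesis
    by (simp add: sample_pairing_sum sample_pairing_scale sample_pairing_norm_Fpoly_squared
        kerA_toeplitz_form_zero)
qed

lemma DA_eq_positive_multiple:
  assumes generator: "\<And>e. e \<in> kerA N1 N2 N3 \<Phi> \<Longrightarrow> \<exists>k. e = (\<lambda>x. k * e0 x)"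
    and "f \<in> DA N1 N2 N3 \<Phi>"
  shows "\<exists>C>0. f = (\<lambda>\<alpha> \<beta> \<gamma>. C * (cmod (Fpoly N1 N2 N3 e0 \<alpha> \<beta> \<gamma>))\<^sup>2)"
proof -
  obtain n c e where c: "\<forall>i<n. 0 \<le> c i" "(\<Sum>i<n. c i) = 1"
    and e: "\<forall>i<n. e i \<in> kerA N1 N2 N3 \<Phi> \<and> e i \<noteq> 0"
    and f: "f = (\<lambda>\<alpha> \<beta> \<gamma>. \<Sum>i<(n::nat). c i * (cmod (Fpoly N1 N2 N3 (e i) \<alpha> \<beta> \<gamma>))\<^sup>2)"
    using assms(2) unfolding DA_def by blast
  have "\<forall>i. \<exists>k. i < n \<longrightarrow> e i = (\<lambda>x. k * e0 x)"
    using e generator by blast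
  from choice[OF this] obtain k where k: "\<forall>i. i < n \<longrightarrow> e i = (\<lambda>x. k i * e0 x)"
    by blast
  define C where "C = (\<Sum>i<n. c i * (cmod (k i))\<^sup>2)"
  have "f = (\<lambda>\<alpha> \<beta> \<gamma>. C * (cmod (Fpoly N1 N2 N3 e0 \<alpha> \<beta> \<gamma>))\<^sup>2)"
    unfolding f C_def sum_distrib_right
    by (intro ext sum.cong refl) (simp add: k Fpoly_cmult norm_mult power_mult_distrib)
  moreover have "C > 0"
  proof -
    have "\<exists>i<n. c i > 0"
    proof (rule ccontr)
      assume "\<not> (\<exists>i<n. c i > 0)"
      with c(1) have "\<forall>i<n. c i = 0" by force
      then have "(\<Sum>i<n. c i) = 0" by simp
      with c(2) show False by simp
    qed
    then obtain i where i: "i < n" "c i > 0" by blast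
    have "e i = (\<lambda>x. k i * e0 x)" "e i \<noteq> 0" using i e k by auto
    then have "k i \<noteq> 0" by (auto simp: fun_eq_iff)
    with i have "0 < c i * (cmod (k i))\<^sup>2" by simp
    also have "\<dots> \<le> C"
      unfolding C_def using i c by (intro member_le_sum) auto
    finally show ?thesis .
  qed
  ultimately show ?thesis by blast
qed

theorem corollary2:
  fixes N1 N2 N3 :: nat and \<Phi> :: "idx \<Rightarrow> complex" and f :: "real \<Rightarrow> real \<Rightarrow> real \<Rightarrow> real"
  assumes "\<Phi> \<in> Pclass N1 N2 N3"
    and "nuA N1 N2 N3 \<Phi> = 1"
    and "f \<in> DA N1 N2 N3 \<Phi>"
  shows "extremal (Qclass N1 N2 N3) f"
proof -
  obtain e0 where generator: "\<And>e. e \<in> kerA N1 N2 N3 \<Phi> \<Longrightarrow> \<exists>k. e = (\<lambda>x. k * e0 x)"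
    using nuA_eq_1_imp_kerA_generator[OF assms(2)] by blast
  obtain C where "C > 0" and f: "f = (\<lambda>\<alpha> \<beta> \<gamma>. C * (cmod (Fpoly N1 N2 N3 e0 \<alpha> \<beta> \<gamma>))\<^sup>2)"
    using DA_eq_positive_multiple[OF generator assms(3)] by blast
  have multiple_of_f: "\<exists>a\<ge>0. g = (\<lambda>\<alpha> \<beta> \<gamma>. a * f \<alpha> \<beta> \<gamma>)"
    if g: "g \<in> Qclass N1 N2 N3" "sample_pairing N1 N2 N3 \<Phi> g = 0" for g
  proof -
    obtain a where "a \<ge> 0" "g = (\<lambda>\<alpha> \<beta> \<gamma>. a * (cmod (Fpoly N1 N2 N3 e0 \<alpha> \<beta> \<gamma>))\<^sup>2)"
      using Qclass_sample_pairing_zero_imp_multiple[OF assms(1) generator g] by blast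
    with \<open>C > 0\<close> show ?thesis by (intro exI[of _ "a / C"]) (auto simp: f)
  qed
  show ?thesis
    unfolding extremal_def
  proof (intro conjI allI impI)
    show "f \<in> Qclass N1 N2 N3" using assms(3) DA_subset_Qclass by blast
    fix g h assume g: "g \<in> Qclass N1 N2 N3" and h: "h \<in> Qclass N1 N2 N3"
      and "f = (\<lambda>\<alpha> \<beta> \<gamma>. g \<alpha> \<beta> \<gamma> + h \<alpha> \<beta> \<gamma>)"
    then have "sample_pairing N1 N2 N3 \<Phi> g + sample_pairing N1 N2 N3 \<Phi> h = 0"
      using DA_sample_pairing_zero[OF assms(3)] by (simp add: sample_pairing_add)
    with Qclass_sample_pairing_nonneg[OF assms(1) g] Qclass_sample_pairing_nonneg[OF assms(1) h]
    have "sample_pairing N1 N2 N3 \<Phi> g = 0" "sample_pairing N1 N2 N3 \<Phi> h = 0"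
      by (auto simp: complex_eq_iff)
    with g h multiple_of_f
    show "\<exists>a\<ge>0. g = (\<lambda>\<alpha> \<beta> \<gamma>. a * f \<alpha> \<beta> \<gamma>)"
      and "\<exists>b\<ge>0. h = (\<lambda>\<alpha> \<beta> \<gamma>. b * f \<alpha> \<beta> \<gamma>)"
      by blast+
  qed
qed

end
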